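(* With $f$ as in the context (and $n\ge 3$), if $u\in U$ satisfies $u\wedge V\subseteq Vf$, then $u=0$.
   Context: Let $p$ be a prime, $\mathbb{F}=\mathrm{GF}(p)$, and $n\ge 3$. Let $V$ be an $\mathbb{F}$-vector space with basis $v_0,\dots,v_n$, $U=\langle v_1,\dots,v_n\rangle$, $W=\Lambda^2V$, and for $x\in V$, $x\wedge V=\{x\wedge y:y\in V\}$. Maps are written on the right. The linear map $f:V\to W$ is given by $v_0f=\sum_{i=1}^n b_i\, v_0\wedge v_i+\sum_{1\le j<k\le n}c_{j,k}\, v_j\wedge v_k$ and $v_if=\sum_{j=1}^n A_{i,j}\, v_0\wedge v_j$ for $1\le i\le n$, where $b\in\mathbb{F}^n$ and $c=(c_{j,k})\in\mathbb{F}^{\binom n2}$ are nonzero, and $A$ is the $n\times n$ companion matrix of the minimal polynomial over $\mathbb{F}$ of a primitive element of $\mathrm{GF}(p^n)$. *)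

theory Defs
  imports "HOL-Computational_Algebra.Polynomial"
begin

text \<open>Vectors of V (basis v_0..v_n) are functions nat => 'a vanishing outside {0..n};
  v_i is the i-th unit vector.\<close>

definition vecs :: "nat \<Rightarrow> (nat \<Rightarrow> 'a::zero) set" where
  "vecs n = {x. \<forall>i>n. x i = 0}"

definition unitv :: "nat \<Rightarrow> nat \<Rightarrow> 'a::{zero,one}" where
  "unitv i = (\<lambda>k. if k = i then 1 else 0)"

text \<open>Exterior square Lambda^2 V modelled as alternating matrices:
  x \<wedge> y is the matrix (i,j) |-> x_i y_j - x_j y_i.\<close>

definition wedge :: "(nat \<Rightarrow> 'a::comm_ring) \<Rightarrow> (nat \<Rightarrow> 'a) \<Rightarrow> (nat \<times> nat \<Rightarrow> 'a)" where
  "wedge x y = (\<lambda>(i,j). x i * y j - x j * y i)"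

text \<open>Companion matrix (rows/columns indexed 1..n) of a monic polynomial
  q = x^n + a_{n-1} x^{n-1} + ... + a_0, in the row convention suited to maps
  written on the right: v_i A = v_{i+1} for i < n, v_n A = - sum_j a_{j-1} v_j.\<close>

definition companion :: "nat \<Rightarrow> 'a::comm_ring_1 poly \<Rightarrow> nat \<Rightarrow> nat \<Rightarrow> 'a" where
  "companion n q i j = (if i < n then (if j = i + 1 then 1 else 0) else - coeff q (j - 1))"

definition fimg :: "nat \<Rightarrow> (nat \<Rightarrow> 'a::comm_ring_1) \<Rightarrow> (nat \<Rightarrow> nat \<Rightarrow> 'a)
    \<Rightarrow> (nat \<Rightarrow> nat \<Rightarrow> 'a) \<Rightarrow> nat \<Rightarrow> (nat \<times> nat \<Rightarrow> 'a)" where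
  "fimg n b c A i = (\<lambda>e.
     (if i = 0 then
        (\<Sum>k\<in>{1..n}. b k * wedge (unitv 0) (unitv k) e)
        + (\<Sum>(j,k)\<in>{(j,k). 1 \<le> j \<and> j < k \<and> k \<le> n}. c j k * wedge (unitv j) (unitv k) e)
      else (\<Sum>j\<in>{1..n}. A i j * wedge (unitv 0) (unitv j) e)))"

definition fmap :: "nat \<Rightarrow> (nat \<Rightarrow> 'a::comm_ring_1) \<Rightarrow> (nat \<Rightarrow> nat \<Rightarrow> 'a)
    \<Rightarrow> (nat \<Rightarrow> nat \<Rightarrow> 'a) \<Rightarrow> (nat \<Rightarrow> 'a) \<Rightarrow> (nat \<times> nat \<Rightarrow> 'a)" where
  "fmap n b c A x = (\<lambda>e. \<Sum>i\<in>{0..n}. x i * fimg n b c A i e)"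

definition is_minpoly :: "('a::field \<Rightarrow> 'b::field) \<Rightarrow> 'b \<Rightarrow> 'a poly \<Rightarrow> bool" where
  "is_minpoly emb \<alpha> q \<longleftrightarrow> lead_coeff q = 1 \<and> poly (map_poly emb q) \<alpha> = 0 \<and>
     (\<forall>r. r \<noteq> 0 \<longrightarrow> poly (map_poly emb r) \<alpha> = 0 \<longrightarrow> degree q \<le> degree r)"

definition primitive_element :: "'b::field \<Rightarrow> bool" where
  "primitive_element \<alpha> \<longleftrightarrow> (\<forall>y. y \<noteq> 0 \<longrightarrow> (\<exists>k::nat. y = \<alpha> ^ k))"

end

theory Submission
  imports Defs
begin

(*
  Only the basis vector v_0 is mapped by f into U \<wedge> U: the images
  v_i f (i \<ge> 1) lie in v_0 \<wedge> U.  Hence the U \<wedge> U-component of x f is x_0 times the fixed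
  tensor D = (v_0 f)|_{U \<wedge> U}, so the U \<wedge> U-components of all elements of Vf are
  proportional (any 2 x 2 "minor" built from two of them vanishes).
  Now let 0 \<noteq> u \<in> U with u_m \<noteq> 0 (m \<ge> 1) and pick k, l \<in> {1..n} with m, k, l distinct,
  which is possible as n \<ge> 3.  The U \<wedge> U-tensors u \<wedge> v_k and u \<wedge> v_l have coordinates
  (u_m, 0) and (0, u_m) at the positions (m,k), (m,l), so they are not proportional and
  cannot both lie in Vf.
*)

lemma fmap_UU_entry:
  assumes "1 \<le> i" "1 \<le> j"
  shows "fmap n b c A x (i,j) = x 0 * fimg n b c A 0 (i,j)"
proof -
  have "fmap n b c A x (i,j) = (\<Sum>r\<in>{0..n}. x r * fimg n b c A r (i,j))"
    by (simp add: fmap_def)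
  also have "\<dots> = (\<Sum>r\<in>{0..n}. if r = 0 then x 0 * fimg n b c A 0 (i,j) else 0)"
    using assms by (intro sum.cong) (auto simp: fimg_def wedge_def unitv_def)
  also have "\<dots> = x 0 * fimg n b c A 0 (i,j)"
    by (simp add: sum.delta)
  finally show ?thesis .
qed

lemma fmap_UU_proportional:
  fixes A :: "nat \<Rightarrow> nat \<Rightarrow> 'a::comm_ring_1"
  assumes "1 \<le> i" "1 \<le> j" "1 \<le> i'" "1 \<le> j'"
  shows "fmap n b c A x (i,j) * fmap n b c A y (i',j')
       = fmap n b c A x (i',j') * fmap n b c A y (i,j)"
  using assms by (simp add: fmap_UU_entry ac_simps)

lemma wedge_unitv_hit:
  "k \<noteq> m \<Longrightarrow> wedge u (unitv k :: nat \<Rightarrow> 'a::comm_ring_1) (m,k) = u m"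
  by (simp add: wedge_def unitv_def)

lemma wedge_unitv_miss:
  "k \<noteq> m \<Longrightarrow> k \<noteq> l \<Longrightarrow> wedge u (unitv k :: nat \<Rightarrow> 'a::comm_ring_1) (m,l) = 0"
  by (simp add: wedge_def unitv_def)

lemma unitv_in_vecs: "k \<le> n \<Longrightarrow> unitv k \<in> vecs n"
  by (auto simp: vecs_def unitv_def)

lemma two_other_indices:
  fixes n m :: nat
  assumes "3 \<le> n" "m \<in> {1..n}"
  obtains k l where "k \<in> {1..n}" "l \<in> {1..n}" "k \<noteq> m" "l \<noteq> m" "k \<noteq> l"
proof -
  have "2 \<le> card ({1..n} - {m})"
    using assms by simp
  then obtain S where "S \<subseteq> {1..n} - {m}" "card S = 2"
    by (meson obtain_subset_with_card_n)
  then obtain k l where "S = {k,l}" "k \<noteq> l"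
    by (meson card_2_iff)
  with \<open>S \<subseteq> _\<close> show ?thesis
    using that by auto
qed

lemma wedge_subset_image_imp_zero:
  fixes u :: "nat \<Rightarrow> 'a::field"
  assumes n: "3 \<le> n" and u: "u \<in> vecs n" "u 0 = 0"
    and image: "\<forall>y\<in>vecs n. wedge u y \<in> fmap n b c A ` vecs n"
  shows "u = (\<lambda>_. 0)"
proof (rule ccontr)
  assume "u \<noteq> (\<lambda>_. 0)"
  then obtain m where um: "u m \<noteq> 0"
    by auto
  have m: "m \<in> {1..n}"
    using um u by (cases m) (auto simp: vecs_def not_le[symmetric])
  obtain k l where kl: "k \<in> {1..n}" "l \<in> {1..n}" "k \<noteq> m" "l \<noteq> m" "k \<noteq> l"
    using two_other_indices[OF n m] by blast
  obtain x where x: "wedge u (unitv k) = fmap n b c A x"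
    using image unitv_in_vecs[of k n] kl by auto
  obtain y where y: "wedge u (unitv l) = fmap n b c A y"
    using image unitv_in_vecs[of l n] kl by auto
  have "fmap n b c A x (m,k) * fmap n b c A y (m,l)
      = fmap n b c A x (m,l) * fmap n b c A y (m,k)"
    using m kl by (intro fmap_UU_proportional) auto
  then have "u m * u m = 0 * 0"
    unfolding x[symmetric] y[symmetric] using kl
    by (simp add: wedge_unitv_hit wedge_unitv_miss)
  with um show False
    by simp
qed

theorem lemma3p2:
  fixes p n :: nat
    and emb :: "'a::{field,finite} \<Rightarrow> 'b::{field,finite}"
    and \<alpha> :: 'b and q :: "'a poly"
    and b :: "nat \<Rightarrow> 'a" and c :: "nat \<Rightarrow> nat \<Rightarrow> 'a" and u :: "nat \<Rightarrow> 'a"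
  assumes "prime p" and "card (UNIV :: 'a set) = p" and "n \<ge> 3"
    and "card (UNIV :: 'b set) = p ^ n"
    and "emb 1 = 1" and "\<And>x y. emb (x + y) = emb x + emb y" and "\<And>x y. emb (x * y) = emb x * emb y"
    and "primitive_element \<alpha>"
    and "is_minpoly emb \<alpha> q"
    and "\<exists>i\<in>{1..n}. b i \<noteq> 0"
    and "\<exists>j k. 1 \<le> j \<and> j < k \<and> k \<le> n \<and> c j k \<noteq> 0"
    and "u \<in> vecs n" and "u 0 = 0"
    and "\<forall>y\<in>vecs n. wedge u y \<in> fmap n b c (companion n q) ` vecs n"
  shows "u = (\<lambda>_. 0)"
  \<comment> \<open>Only n \<ge> 3 and the shape of f matter.\<close>
  using assms(3,12-14) by (rule wedge_subset_image_imp_zero)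

end
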